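(* Let $0=K^0<K^1<\cdots<K^N$ and $0=T_0<T_1<\cdots<T_M$, and let $C_j^i$ ($j=1,\dots,M$, $i=0,\dots,N$) be real numbers. With $dC_j^i:=\frac{C_j^{i+1}-C_j^i}{K^{i+1}-K^i}$ for $i=0,\dots,N-1$ and $dC_j^N:=0$, assume for every $j=1,\dots,M$: $C_j^0=1$; $dC_j^0=-1$; $C_j^N=0$; $dC_j^{i-1}\le dC_j^{i}$ for $i=1,\dots,N$; and $C_j^i\le C_{j+1}^i$ for all $i$ and $j=1,\dots,M-1$. For $j=1,\dots,M$ let $\bar C_j(K):=dC_j^i(K-K^{i+1})+C_j^{i+1}$ for $K^i\le K<K^{i+1}$ ($i=0,\dots,N-1$) and $\bar C_j(K):=0$ for $K\ge K^N$; let $\bar C_0(K):=(1-K)^+$. For $j=0,\dots,M-1$ let $\alpha_j:[T_j,T_{j+1}]\to[0,1]$ be non-decreasing with $\alpha_j(T_j)=0$, $\alpha_j(T_{j+1})=1$, and set $\bar C(T,K):=\alpha_j(T)\bar C_{j+1}(K)+(1-\alpha_j(T))\bar C_j(K)$ for $T\in[T_j,T_{j+1}]$, $K\ge 0$. Then $\bar C$ is an arbitrage-free call price surface on $[0,T_M]\times[0,\infty)$.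
   Context: A function $C:\mathcal T\times[0,\infty)\to[0,\infty)$, with $\mathcal T\subseteq[0,\infty)$ an interval containing $0$, is an arbitrage-free call price surface on $\mathcal T\times[0,\infty)$ if there exist a probability measure $\mathbb P$ and a $\mathbb P$-martingale $(Z_T)_{T\in\mathcal T}$ with $Z_0=1$ a.s. and $Z_T>0$ a.s. for all $T$, such that $C(T,K)=\mathbb E_{\mathbb P}[(Z_T-K)^+]$ for all $T\in\mathcal T$, $K\ge0$. *)

theory Defs
  imports "HOL-Probability.Probability"
begin

definition is_filtration ::
  "'a measure \<Rightarrow> real set \<Rightarrow> (real \<Rightarrow> 'a measure) \<Rightarrow> bool" where
  "is_filtration M TT F \<longleftrightarrow>
     (\<forall>t\<in>TT. subalgebra M (F t)) \<and>
     (\<forall>s\<in>TT. \<forall>t\<in>TT. s \<le> t \<longrightarrow> sets (F s) \<subseteq> sets (F t))"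

definition is_martingale ::
  "'a measure \<Rightarrow> real set \<Rightarrow> (real \<Rightarrow> 'a measure) \<Rightarrow> (real \<Rightarrow> 'a \<Rightarrow> real) \<Rightarrow> bool" where
  "is_martingale M TT F Z \<longleftrightarrow>
     is_filtration M TT F \<and>
     (\<forall>t\<in>TT. integrable M (Z t) \<and> Z t \<in> borel_measurable (F t)) \<and>
     (\<forall>s\<in>TT. \<forall>t\<in>TT. s \<le> t \<longrightarrow>
        (AE \<omega> in M. real_cond_exp M (F s) (Z t) \<omega> = Z s \<omega>))"

text \<open>Arbitrage-free call price surface on TT x [0,oo).  The sample space is the
  path space real => real (rich enough to carry the canonical version of any
  real process indexed by reals).\<close>
definition arbitrage_free_call_surface ::
  "real set \<Rightarrow> (real \<Rightarrow> real \<Rightarrow> real) \<Rightarrow> bool" where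
  "arbitrage_free_call_surface TT C \<longleftrightarrow>
     (\<exists>(P :: (real \<Rightarrow> real) measure) F Z.
        prob_space P \<and> is_martingale P TT F Z \<and>
        (AE \<omega> in P. Z 0 \<omega> = 1) \<and>
        (\<forall>t\<in>TT. AE \<omega> in P. Z t \<omega> > 0) \<and>
        (\<forall>t\<in>TT. \<forall>k\<ge>0. C t k = (\<integral>\<omega>. max (Z t \<omega> - k) 0 \<partial>P)))"

definition dC :: "nat \<Rightarrow> (nat \<Rightarrow> real) \<Rightarrow> (nat \<Rightarrow> nat \<Rightarrow> real) \<Rightarrow> nat \<Rightarrow> nat \<Rightarrow> real" where
  "dC N Ks C j i = (if i < N then (C j (Suc i) - C j i) / (Ks (Suc i) - Ks i) else 0)"

definition Cbar :: "nat \<Rightarrow> (nat \<Rightarrow> real) \<Rightarrow> (nat \<Rightarrow> nat \<Rightarrow> real) \<Rightarrow> nat \<Rightarrow> real \<Rightarrow> real" where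
  "Cbar N Ks C j x =
     (if j = 0 then max (1 - x) 0
      else if (\<exists>i<N. Ks i \<le> x \<and> x < Ks (Suc i)) then
        (let i = (THE i. i < N \<and> Ks i \<le> x \<and> x < Ks (Suc i))
         in dC N Ks C j i * (x - Ks (Suc i)) + C j (Suc i))
      else 0)"

end

theory Submission
  imports Defs
begin

(*
  Each slice Cbar_j, j >= 1, is the call price function k |-> E (Y - k)^+ of the law mu_j on the
  strike grid that puts the slope increment dC_j^i - dC_j^(i-1) on K^i: convexity makes these
  weights nonnegative, dC_j^0 = -1 makes them sum to one, and C_j^0 = 1 says that mu_j has mean one;
  Cbar_0 belongs to the Dirac mass at 1.  Calendar monotonicity C_j <= C_(j+1) on the grid says that
  mu_j precedes mu_(j+1) in convex order, so a discrete Strassen theorem yields martingale kernels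
  from mu_j to mu_(j+1).  It is proved by repeatedly splitting an atom that lies strictly between two
  strikes at which the call prices already agree, raising the call prices of mu_j towards those of
  mu_(j+1) without overshooting.  Chaining the kernels gives a martingale 1 = Y_0, Y_1, ..., Y_M.
  With an independent uniform U, the price Z_t := Y_(j+1) if U < alpha_j(t) and Z_t := Y_j otherwise
  (t in [T_j, T_(j+1)]) samples Y at an index that is nondecreasing in t, so Z is a martingale for
  the filtration of the stopped path, and
  E (Z_t - k)^+ = alpha_j(t) Cbar_(j+1)(k) + (1 - alpha_j(t)) Cbar_j(k).
*)

section \<open>Call prices of finitely supported distributions\<close>

lemma integral_bind_pmf_finite:
  fixes f :: "'b \<Rightarrow> real"
  assumes fin: "finite (set_pmf M)" and finN: "\<And>x. x \<in> set_pmf M \<Longrightarrow> finite (set_pmf (N x))"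
  shows "(\<integral>y. f y \<partial>bind_pmf M N) = (\<integral>x. (\<integral>y. f y \<partial>N x) \<partial>M)"
proof -
  let ?A = "set_pmf (bind_pmf M N)"
  have finA: "finite ?A" using fin finN by simp
  have "(\<integral>y. f y \<partial>bind_pmf M N) = (\<Sum>y\<in>?A. f y * pmf (bind_pmf M N) y)"
    by (rule integral_measure_pmf_real[OF finA]) auto
  also have "\<dots> = (\<Sum>y\<in>?A. \<Sum>x\<in>set_pmf M. f y * pmf (N x) y * pmf M x)"
    by (intro sum.cong refl, subst pmf_bind, subst integral_measure_pmf_real[OF fin])
      (auto simp: sum_distrib_left mult_ac)
  also have "\<dots> = (\<Sum>x\<in>set_pmf M. (\<Sum>y\<in>?A. f y * pmf (N x) y) * pmf M x)"
    by (subst sum.swap) (simp add: sum_distrib_right)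
  also have "\<dots> = (\<Sum>x\<in>set_pmf M. (\<integral>y. f y \<partial>N x) * pmf M x)"
    by (intro sum.cong refl arg_cong2[where f = "(*)"] integral_measure_pmf_real[OF finA, symmetric])
      auto
  also have "\<dots> = (\<integral>x. (\<integral>y. f y \<partial>N x) \<partial>M)"
    by (rule integral_measure_pmf_real[OF fin, symmetric]) auto
  finally show ?thesis .
qed

lemma pmf_eq_integral_indicator: "pmf p z = (\<integral>y. indicator {z} y \<partial>measure_pmf p)"
  by (subst integral_measure_pmf_real[of "{z}"]) (auto split: split_indicator_asm)

lemma obtain_interpolation_weight:
  fixes a b c :: real
  assumes "a < c" "c < b"
  obtains w where "0 < w" "w < 1" "c = w * a + (1 - w) * b"
proof
  define w where "w = (b - c) / (b - a)"
  show "0 < w" "w < 1" using assms by (auto simp: w_def)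
  have "w * (b - a) = b - c" using assms by (simp add: w_def)
  then show "c = w * a + (1 - w) * b" by (simp add: algebra_simps)
qed

lemma max_0_convex:
  fixes u v w :: real
  assumes "0 \<le> w" "w \<le> 1"
  shows "max (w * u + (1 - w) * v) 0 \<le> w * max u 0 + (1 - w) * max v 0"
proof -
  have "w * u \<le> w * max u 0" "(1 - w) * v \<le> (1 - w) * max v 0"
    using assms by (simp_all add: mult_left_mono)
  then show ?thesis using assms by simp
qed

lemma max_0_affine:
  fixes u v w :: real
  assumes "0 \<le> w" "w \<le> 1" "0 \<le> u * v"
  shows "max (w * u + (1 - w) * v) 0 = w * max u 0 + (1 - w) * max v 0"
proof (cases "0 \<le> u \<and> 0 \<le> v")
  case True
  then show ?thesis using assms by simp
next
  case False
  then have "u \<le> 0" "v \<le> 0" using assms(3) zero_le_mult_iff by auto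
  then have "w * u \<le> 0" "(1 - w) * v \<le> 0" using assms by (simp_all add: mult_nonneg_nonpos)
  then show ?thesis using \<open>u \<le> 0\<close> \<open>v \<le> 0\<close> by simp
qed

lemma max_0_strictly_convex:
  fixes u v w :: real
  assumes "0 < w" "w < 1" "u * v < 0"
  shows "max (w * u + (1 - w) * v) 0 < w * max u 0 + (1 - w) * max v 0"
proof -
  have "u < 0 \<and> 0 < v \<or> v < 0 \<and> 0 < u" using assms(3) by (auto simp: mult_less_0_iff)
  then show ?thesis using assms by (auto simp: max_def mult_pos_neg)
qed

definition call_price :: "real pmf \<Rightarrow> real \<Rightarrow> real" where
  "call_price p k = (\<integral>y. max (y - k) 0 \<partial>measure_pmf p)"

lemma call_price_convex:
  assumes fin: "finite (set_pmf p)" and w: "0 \<le> w" "w \<le> 1"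
  shows "call_price p (w * a + (1 - w) * b) \<le> w * call_price p a + (1 - w) * call_price p b"
proof -
  have "call_price p (w * a + (1 - w) * b) = (\<integral>y. max (w * (y - a) + (1 - w) * (y - b)) 0 \<partial>p)"
    unfolding call_price_def by (simp add: algebra_simps)
  also have "\<dots> \<le> (\<integral>y. w * max (y - a) 0 + (1 - w) * max (y - b) 0 \<partial>p)"
    using fin w by (intro integral_mono max_0_convex integrable_measure_pmf_finite)
  also have "\<dots> = w * call_price p a + (1 - w) * call_price p b"
    using fin by (simp add: call_price_def integrable_measure_pmf_finite)
  finally show ?thesis .
qed

lemma call_price_affine:
  assumes fin: "finite (set_pmf p)" and w: "0 \<le> w" "w \<le> 1" and "a \<le> b"
    and gap: "\<And>y. y \<in> set_pmf p \<Longrightarrow> y \<le> a \<or> b \<le> y"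
  shows "call_price p (w * a + (1 - w) * b) = w * call_price p a + (1 - w) * call_price p b"
proof -
  have "call_price p (w * a + (1 - w) * b) = (\<integral>y. max (w * (y - a) + (1 - w) * (y - b)) 0 \<partial>p)"
    unfolding call_price_def by (simp add: algebra_simps)
  also have "\<dots> = (\<integral>y. w * max (y - a) 0 + (1 - w) * max (y - b) 0 \<partial>p)"
  proof (intro integral_cong_AE AE_pmfI max_0_affine w)
    fix y assume "y \<in> set_pmf p"
    then have "y \<le> a \<or> b \<le> y" by (rule gap)
    then show "0 \<le> (y - a) * (y - b)"
      using \<open>a \<le> b\<close> by (auto intro: mult_nonpos_nonpos)
  qed simp_all
  also have "\<dots> = w * call_price p a + (1 - w) * call_price p b"
    using fin by (simp add: call_price_def integrable_measure_pmf_finite)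
  finally show ?thesis .
qed

section \<open>Martingale transport on a strike grid\<close>

definition spread_kernel :: "real \<Rightarrow> real \<Rightarrow> real \<Rightarrow> real \<Rightarrow> real \<Rightarrow> real pmf" where
  "spread_kernel \<theta> w a b y =
     (if y = w * a + (1 - w) * b
      then bind_pmf (bernoulli_pmf \<theta>)
             (\<lambda>move. if move then map_pmf (\<lambda>left. if left then a else b) (bernoulli_pmf w)
                      else return_pmf y)
      else return_pmf y)"

lemma set_spread_kernel: "set_pmf (spread_kernel \<theta> w a b y) \<subseteq> {a, b, y}"
  by (auto simp: spread_kernel_def split: if_splits)

lemma integral_spread_kernel:
  fixes f :: "real \<Rightarrow> real"
  assumes "0 \<le> \<theta>" "\<theta> \<le> 1" "0 \<le> w" "w \<le> 1"
  shows "(\<integral>z. f z \<partial>spread_kernel \<theta> w a b y) =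
    f y + (if y = w * a + (1 - w) * b then \<theta> * (w * f a + (1 - w) * f b - f y) else 0)"
proof (cases "y = w * a + (1 - w) * b")
  case True
  have "finite (set_pmf (r :: bool pmf))" for r by (rule finite_subset[of _ UNIV]) auto
  then have "(\<integral>z. f z \<partial>spread_kernel \<theta> w a b y) =
      (\<integral>move. (\<integral>z. f z \<partial>(if move then map_pmf (\<lambda>left. if left then a else b) (bernoulli_pmf w)
                                else return_pmf y)) \<partial>bernoulli_pmf \<theta>)"
    unfolding spread_kernel_def if_P[OF True] by (intro integral_bind_pmf_finite) auto
  also have "\<dots> = f y + \<theta> * (w * f a + (1 - w) * f b - f y)"
    using assms by (simp add: algebra_simps)
  finally show ?thesis using True by simp
qed (simp add: spread_kernel_def)

lemma mean_spread_kernel: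
  assumes "0 \<le> \<theta>" "\<theta> \<le> 1" "0 \<le> w" "w \<le> 1"
  shows "(\<integral>z. z \<partial>spread_kernel \<theta> w a b y) = y"
  using integral_spread_kernel[OF assms, where f = "\<lambda>z. z"] by simp

lemma integral_bind_spread_kernel:
  fixes f :: "real \<Rightarrow> real"
  assumes fin: "finite (set_pmf p)" and "0 \<le> \<theta>" "\<theta> \<le> 1" "0 \<le> w" "w \<le> 1"
    and c: "c = w * a + (1 - w) * b"
  shows "(\<integral>z. f z \<partial>bind_pmf p (spread_kernel \<theta> w a b)) =
    (\<integral>z. f z \<partial>p) + pmf p c * \<theta> * (w * f a + (1 - w) * f b - f c)"
proof -
  have fin_kernel: "finite (set_pmf (spread_kernel \<theta> w a b y))" for y
    by (rule finite_subset[OF set_spread_kernel]) simp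
  have "(\<integral>z. f z \<partial>bind_pmf p (spread_kernel \<theta> w a b)) =
      (\<integral>y. (\<integral>z. f z \<partial>spread_kernel \<theta> w a b y) \<partial>p)"
    by (rule integral_bind_pmf_finite[OF fin fin_kernel])
  also have "\<dots> = (\<integral>y. f y + indicator {c} y * (\<theta> * (w * f a + (1 - w) * f b - f c)) \<partial>p)"
    by (intro Bochner_Integration.integral_cong refl)
      (auto simp: integral_spread_kernel[OF assms(2-5)] c indicator_def)
  also have "\<dots> = (\<integral>z. f z \<partial>p) + pmf p c * \<theta> * (w * f a + (1 - w) * f b - f c)"
    using fin by (simp add: integrable_measure_pmf_finite pmf_eq_integral_indicator)
  finally show ?thesis .
qed

definition spread_gain :: "real \<Rightarrow> real \<Rightarrow> real \<Rightarrow> real \<Rightarrow> real" where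
  "spread_gain w a b k =
     w * max (a - k) 0 + (1 - w) * max (b - k) 0 - max (w * (a - k) + (1 - w) * (b - k)) 0"

lemma spread_gain_nonneg:
  assumes "0 \<le> w" "w \<le> 1"
  shows "0 \<le> spread_gain w a b k"
  unfolding spread_gain_def using max_0_convex[OF assms] by simp

lemma spread_gain_eq_0:
  assumes "0 \<le> w" "w \<le> 1" "a \<le> b" "k \<le> a \<or> b \<le> k"
  shows "spread_gain w a b k = 0"
proof -
  have "0 \<le> (a - k) * (b - k)" using assms(3,4) by (auto intro: mult_nonpos_nonpos)
  then show ?thesis unfolding spread_gain_def using max_0_affine[OF assms(1,2)] by simp
qed

lemma spread_gain_pos:
  assumes "0 < w" "w < 1" "a < k" "k < b"
  shows "0 < spread_gain w a b k"
proof -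
  have "(a - k) * (b - k) < 0" using assms(3,4) by (simp add: mult_neg_pos)
  then show ?thesis unfolding spread_gain_def using max_0_strictly_convex[OF assms(1,2)] by simp
qed

lemma call_price_bind_spread_kernel:
  assumes "finite (set_pmf p)" "0 \<le> \<theta>" "\<theta> \<le> 1" "0 \<le> w" "w \<le> 1"
  shows "call_price (bind_pmf p (spread_kernel \<theta> w a b)) k =
    call_price p k + pmf p (w * a + (1 - w) * b) * \<theta> * spread_gain w a b k"
proof -
  have "w * a + (1 - w) * b - k = w * (a - k) + (1 - w) * (b - k)" by (simp add: algebra_simps)
  then show ?thesis
    unfolding call_price_def spread_gain_def by (simp add: integral_bind_spread_kernel[OF assms refl])
qed

locale strict_grid =
  fixes x :: "nat \<Rightarrow> real" and n :: nat
  assumes x_step: "\<And>i. i < n \<Longrightarrow> x i < x (Suc i)"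
begin

lemma x_less: "i < j \<Longrightarrow> j \<le> n \<Longrightarrow> x i < x j"
proof (induction j)
  case (Suc j)
  then show ?case using x_step[of j] by (cases "i = j") auto
qed simp

lemma x_le: "i \<le> j \<Longrightarrow> j \<le> n \<Longrightarrow> x i \<le> x j"
  using x_less[of i j] by (cases "i = j") auto

lemma x_le_iff: "i \<le> n \<Longrightarrow> j \<le> n \<Longrightarrow> x i \<le> x j \<longleftrightarrow> i \<le> j"
  by (meson not_le x_le x_less)

lemma x_eq_iff: "i \<le> n \<Longrightarrow> j \<le> n \<Longrightarrow> x i = x j \<longleftrightarrow> i = j"
  using x_le_iff[of i j] x_le_iff[of j i] by auto

lemma inj_on_x: "inj_on x {..n}"
  by (auto simp: inj_on_def x_eq_iff)

lemma segment_unique: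
  assumes "i < n" "x i \<le> k" "k < x (Suc i)" "l < n" "x l \<le> k" "k < x (Suc l)"
  shows "i = l"
proof (rule ccontr)
  assume "i \<noteq> l"
  then have "x (Suc i) \<le> x l \<or> x (Suc l) \<le> x i" using assms x_le by (cases "i < l") auto
  then show False using assms by auto
qed

lemma obtain_segment:
  assumes "x 0 \<le> k" "k < x n"
  obtains l where "l < n" "x l \<le> k" "k < x (Suc l)"
proof -
  have "m \<le> n \<Longrightarrow> k < x m \<Longrightarrow> \<exists>l<m. x l \<le> k \<and> k < x (Suc l)" for m
  proof (induction m)
    case (Suc m)
    then show ?case by (cases "k < x m") (auto intro: less_SucI)
  qed (use assms in simp)
  then show thesis using that assms by blast
qed

definition on_grid :: "real pmf \<Rightarrow> bool" where
  "on_grid p \<longleftrightarrow> set_pmf p \<subseteq> x ` {..n}"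

lemma finite_set_pmf_on_grid: "on_grid p \<Longrightarrow> finite (set_pmf p)"
  unfolding on_grid_def by (meson finite_atMost finite_imageI finite_subset)

lemma integral_on_grid:
  fixes f :: "real \<Rightarrow> real"
  assumes "on_grid p"
  shows "(\<integral>y. f y \<partial>p) = (\<Sum>l\<le>n. pmf p (x l) * f (x l))"
proof -
  have "(\<integral>y. f y \<partial>p) = (\<Sum>y\<in>x ` {..n}. f y * pmf p y)"
    by (rule integral_measure_pmf_real) (use assms in \<open>auto simp: on_grid_def\<close>)
  also have "\<dots> = (\<Sum>l\<le>n. pmf p (x l) * f (x l))"
    by (simp add: sum.reindex[OF inj_on_x] mult.commute)
  finally show ?thesis .
qed

lemma call_price_last_node: "on_grid p \<Longrightarrow> call_price p (x n) = 0"
  unfolding call_price_def by (subst integral_on_grid) (auto intro!: sum.neutral simp: x_le)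

definition upper_mass :: "real pmf \<Rightarrow> nat \<Rightarrow> real" where
  "upper_mass p i = (\<Sum>l\<in>{i..n}. pmf p (x l))"

lemma upper_mass_0: "on_grid p \<Longrightarrow> upper_mass p 0 = 1"
  using integral_on_grid[of p "\<lambda>_. 1"] by (simp add: upper_mass_def atLeast0AtMost)

lemma pmf_eq_upper_mass_diff: "m \<le> n \<Longrightarrow> pmf p (x m) = upper_mass p m - upper_mass p (Suc m)"
  unfolding upper_mass_def by (subst sum.atLeast_Suc_atMost) auto

lemma call_price_decrement:
  assumes "on_grid p" "i < n"
  shows "call_price p (x i) - call_price p (x (Suc i)) = (x (Suc i) - x i) * upper_mass p (Suc i)"
proof -
  have "call_price p (x i) - call_price p (x (Suc i))
      = (\<Sum>l\<le>n. pmf p (x l) * (max (x l - x i) 0 - max (x l - x (Suc i)) 0))"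
    unfolding call_price_def integral_on_grid[OF assms(1)] by (simp add: sum_subtractf algebra_simps)
  also have "\<dots> = (\<Sum>l\<le>n. if Suc i \<le> l then (x (Suc i) - x i) * pmf p (x l) else 0)"
  proof (intro sum.cong refl)
    fix l assume "l \<in> {..n}"
    then have "x (Suc i) \<le> x l \<longleftrightarrow> Suc i \<le> l" "x l \<le> x i \<longleftrightarrow> l \<le> i" "x i < x (Suc i)"
      using assms x_le_iff x_step by auto
    then show "pmf p (x l) * (max (x l - x i) 0 - max (x l - x (Suc i)) 0)
        = (if Suc i \<le> l then (x (Suc i) - x i) * pmf p (x l) else 0)"
      by (auto simp: max_def algebra_simps)
  qed
  also have "\<dots> = (x (Suc i) - x i) * upper_mass p (Suc i)"
    unfolding upper_mass_def sum_distrib_left sum.inter_filter[symmetric, OF finite_atMost]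
    by (intro sum.cong) auto
  finally show ?thesis .
qed

lemma pmf_eq_if_call_prices_eq:
  assumes p: "on_grid p" and q: "on_grid q"
    and eq: "\<And>i. i \<le> n \<Longrightarrow> call_price p (x i) = call_price q (x i)"
  shows "p = q"
proof -
  have upper: "upper_mass p i = upper_mass q i" if "i \<le> Suc n" for i
  proof (cases i)
    case 0
    then show ?thesis using upper_mass_0[OF p] upper_mass_0[OF q] by simp
  next
    case (Suc m)
    show ?thesis
    proof (cases "m < n")
      case True
      have "(x (Suc m) - x m) * upper_mass p (Suc m) = (x (Suc m) - x m) * upper_mass q (Suc m)"
        using call_price_decrement[OF p True] call_price_decrement[OF q True] eq[of m] eq[of "Suc m"]
          True by linarith
      then show ?thesis using x_step[OF True] Suc by simp
    next
      case False
      then show ?thesis using Suc that by (simp add: upper_mass_def)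
    qed
  qed
  show ?thesis
  proof (rule pmf_eqI)
    fix z
    show "pmf p z = pmf q z"
    proof (cases "z \<in> x ` {..n}")
      case True
      then show ?thesis using upper pmf_eq_upper_mass_diff by auto
    next
      case False
      then have "z \<notin> set_pmf p" "z \<notin> set_pmf q" using p q by (auto simp: on_grid_def)
      then show ?thesis by (simp add: set_pmf_iff)
    qed
  qed
qed

end

definition martingale_kernel :: "real set \<Rightarrow> real pmf \<Rightarrow> (real \<Rightarrow> real pmf) \<Rightarrow> bool" where
  "martingale_kernel S p \<kappa> \<longleftrightarrow> (\<forall>y\<in>set_pmf p. set_pmf (\<kappa> y) \<subseteq> S \<and> (\<integral>z. z \<partial>\<kappa> y) = y)"

lemma martingale_kernel_return: "set_pmf p \<subseteq> S \<Longrightarrow> martingale_kernel S p return_pmf"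
  by (auto simp: martingale_kernel_def)

lemma martingale_kernel_bind:
  assumes S: "finite S" and \<kappa>: "martingale_kernel S p \<kappa>"
    and \<kappa>': "martingale_kernel S (bind_pmf p \<kappa>) \<kappa>'"
  shows "martingale_kernel S p (\<lambda>y. bind_pmf (\<kappa> y) \<kappa>')"
  unfolding martingale_kernel_def
proof (intro ballI conjI)
  fix y assume y: "y \<in> set_pmf p"
  then have sub: "set_pmf (\<kappa> y) \<subseteq> set_pmf (bind_pmf p \<kappa>)" by auto
  then show "set_pmf (bind_pmf (\<kappa> y) \<kappa>') \<subseteq> S"
    using \<kappa>' by (auto simp: martingale_kernel_def)
  have "set_pmf (\<kappa> y) \<subseteq> S" "\<And>v. v \<in> set_pmf (\<kappa> y) \<Longrightarrow> set_pmf (\<kappa>' v) \<subseteq> S"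
    using \<kappa> \<kappa>' y sub unfolding martingale_kernel_def by blast+
  then have fin: "finite (set_pmf (\<kappa> y))" "\<And>v. v \<in> set_pmf (\<kappa> y) \<Longrightarrow> finite (set_pmf (\<kappa>' v))"
    using S by (auto intro: finite_subset)
  have "(\<integral>z. z \<partial>bind_pmf (\<kappa> y) \<kappa>') = (\<integral>v. (\<integral>z. z \<partial>\<kappa>' v) \<partial>\<kappa> y)"
    by (rule integral_bind_pmf_finite[OF fin])
  also have "\<dots> = (\<integral>v. v \<partial>\<kappa> y)"
    using sub \<kappa>' by (intro integral_cong_AE) (auto simp: AE_measure_pmf_iff martingale_kernel_def)
  also have "\<dots> = y" using \<kappa> y by (simp add: martingale_kernel_def)
  finally show "(\<integral>z. z \<partial>bind_pmf (\<kappa> y) \<kappa>') = y" .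
qed

lemma obtain_zeros_around_positive:
  fixes D :: "nat \<Rightarrow> real"
  assumes "D 0 = 0" "D n = 0" "i \<le> n" "0 < D i" and nonneg: "\<And>l. l \<le> n \<Longrightarrow> 0 \<le> D l"
  obtains a b where "a < i" "i < b" "b \<le> n" "D a = 0" "D b = 0" "\<And>l. a < l \<Longrightarrow> l < b \<Longrightarrow> 0 < D l"
proof
  define A where "A = {l. l < i \<and> D l = 0}"
  define B where "B = {l. i < l \<and> l \<le> n \<and> D l = 0}"
  have "0 \<in> A" "n \<in> B" using assms by (auto simp: A_def B_def intro: gr0I le_neq_trans)
  moreover have "finite A" "finite B" by (auto simp: A_def B_def)
  ultimately have "Max A \<in> A" "Min B \<in> B" by (auto intro: Max_in Min_in)
  then show "Max A < i" "i < Min B" "Min B \<le> n" "D (Max A) = 0" "D (Min B) = 0"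
    by (auto simp: A_def B_def)
  fix l assume l: "Max A < l" "l < Min B"
  have "l \<notin> A" "l \<notin> B" using l \<open>finite A\<close> \<open>finite B\<close> by (auto dest: Max_ge Min_le)
  moreover have "l \<le> n" using l \<open>Min B \<in> B\<close> by (auto simp: B_def)
  ultimately show "0 < D l"
    using nonneg[of l] assms(4) by (cases "l < i"; cases "l = i") (auto simp: A_def B_def)
qed

lemma obtain_largest_step:
  fixes D T :: "nat \<Rightarrow> real"
  assumes "0 < m" "\<And>l. a < l \<Longrightarrow> l < b \<Longrightarrow> 0 < D l" "\<And>l. a < l \<Longrightarrow> l < b \<Longrightarrow> 0 < T l"
  obtains \<theta> where "0 < \<theta>" "\<theta> \<le> m" "\<And>l. a < l \<Longrightarrow> l < b \<Longrightarrow> \<theta> * T l \<le> D l"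
    "\<theta> = m \<or> (\<exists>l. a < l \<and> l < b \<and> \<theta> * T l = D l)"
proof
  let ?S = "insert m ((\<lambda>l. D l / T l) ` {a<..<b})"
  show "0 < Min ?S" using assms by (subst Min_gr_iff) auto
  show "Min ?S \<le> m" by (intro Min_le) auto
  show "Min ?S * T l \<le> D l" if "a < l" "l < b" for l
  proof -
    have "Min ?S \<le> D l / T l" using that by (intro Min_le) auto
    then show ?thesis using assms(3)[OF that] by (simp add: pos_le_divide_eq)
  qed
  have "Min ?S \<in> ?S" by (intro Min_in) auto
  then consider "Min ?S = m" | l where "a < l" "l < b" "Min ?S = D l / T l" by auto
  then show "Min ?S = m \<or> (\<exists>l. a < l \<and> l < b \<and> Min ?S * T l = D l)"
  proof cases
    case (2 l)
    then have "Min ?S * T l = D l" using assms(3)[of l] by simp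
    then show ?thesis using 2 by blast
  qed simp
qed

context strict_grid
begin

lemma mass_strictly_between:
  assumes p: "on_grid p" and q: "on_grid q" and abi: "a < i" "i < b" "b \<le> n"
    and eq: "call_price p (x a) = call_price q (x a)" "call_price p (x b) = call_price q (x b)"
    and less: "call_price p (x i) < call_price q (x i)"
  obtains j where "a < j" "j < b" "0 < pmf p (x j)"
proof (rule ccontr)
  note mass = that
  assume "\<not> thesis"
  then have no_mass: "pmf p (x j) = 0" if "a < j" "j < b" for j
    using mass[OF that] pmf_nonneg[of p "x j"] by linarith
  have gap: "y \<le> x a \<or> x b \<le> y" if y: "y \<in> set_pmf p" for y
  proof -
    obtain l where l: "l \<le> n" "y = x l" using y p by (auto simp: on_grid_def)
    then have "\<not> (a < l \<and> l < b)" using no_mass y by (auto simp: set_pmf_iff)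
    then show ?thesis using l abi x_le by (auto simp: not_less)
  qed
  have "x a < x i" "x i < x b" using x_less abi by auto
  then obtain w where w: "0 < w" "w < 1" "x i = w * x a + (1 - w) * x b"
    by (rule obtain_interpolation_weight)
  have "call_price p (x i) = w * call_price p (x a) + (1 - w) * call_price p (x b)"
    unfolding w(3) using w abi x_le gap
    by (intro call_price_affine finite_set_pmf_on_grid[OF p]) auto
  also have "\<dots> \<ge> call_price q (x i)"
    unfolding w(3) eq using w by (intro call_price_convex finite_set_pmf_on_grid[OF q]) auto
  finally show False using less by simp
qed

lemma spread_on_grid:
  assumes p: "on_grid p" and ajb: "a < j" "j < b" "b \<le> n"
    and \<theta>: "0 < \<theta>" "\<theta> \<le> pmf p (x j)"
    and w: "0 \<le> w" "w \<le> 1" "x j = w * x a + (1 - w) * x b"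
  defines "\<kappa> \<equiv> spread_kernel (\<theta> / pmf p (x j)) w (x a) (x b)"
  shows "martingale_kernel (x ` {..n}) p \<kappa>"
    and "\<And>k. call_price (bind_pmf p \<kappa>) k = call_price p k + \<theta> * spread_gain w (x a) (x b) k"
    and "pmf (bind_pmf p \<kappa>) (x j) = pmf p (x j) - \<theta>"
    and "\<And>i. i \<le> n \<Longrightarrow> i \<noteq> a \<Longrightarrow> i \<noteq> b \<Longrightarrow> pmf (bind_pmf p \<kappa>) (x i) \<le> pmf p (x i)"
proof -
  have fin: "finite (set_pmf p)" by (rule finite_set_pmf_on_grid[OF p])
  have ratio: "0 \<le> \<theta> / pmf p (x j)" "\<theta> / pmf p (x j) \<le> 1" using \<theta> by auto
  have "set_pmf (\<kappa> y) \<subseteq> x ` {..n}" if "y \<in> set_pmf p" for y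
  proof -
    have "set_pmf (\<kappa> y) \<subseteq> {x a, x b, y}" by (simp add: \<kappa>_def set_spread_kernel)
    also have "\<dots> \<subseteq> x ` {..n}" using that p ajb by (auto simp: on_grid_def)
    finally show ?thesis .
  qed
  then show "martingale_kernel (x ` {..n}) p \<kappa>"
    using mean_spread_kernel[OF ratio w(1,2)] by (simp add: martingale_kernel_def \<kappa>_def)
  have "pmf p (x j) * (\<theta> / pmf p (x j)) = \<theta>" using \<theta> by simp
  then show "call_price (bind_pmf p \<kappa>) k = call_price p k + \<theta> * spread_gain w (x a) (x b) k" for k
    using call_price_bind_spread_kernel[OF fin ratio w(1,2), of "x a" "x b" k, folded w(3)]
    by (simp add: \<kappa>_def)
  have integral: "(\<integral>z. f z \<partial>bind_pmf p \<kappa>) =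
      (\<integral>z. f z \<partial>p) + \<theta> * (w * f (x a) + (1 - w) * f (x b) - f (x j))" for f :: "real \<Rightarrow> real"
    using integral_bind_spread_kernel[OF fin ratio w] \<theta> by (simp add: \<kappa>_def)
  have "x a < x j" "x j < x b" using x_less ajb by auto
  then show "pmf (bind_pmf p \<kappa>) (x j) = pmf p (x j) - \<theta>"
    unfolding pmf_eq_integral_indicator integral by simp
  show "pmf (bind_pmf p \<kappa>) (x i) \<le> pmf p (x i)" if "i \<le> n" "i \<noteq> a" "i \<noteq> b" for i
  proof -
    have "x a \<noteq> x i" "x b \<noteq> x i" using that ajb x_eq_iff by auto
    then show ?thesis unfolding pmf_eq_integral_indicator integral using \<theta> by simp
  qed
qed

definition gap_nodes :: "real pmf \<Rightarrow> real pmf \<Rightarrow> nat set" where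
  "gap_nodes p q = {i. i \<le> n \<and> call_price p (x i) < call_price q (x i)}"

definition charged_gap_nodes :: "real pmf \<Rightarrow> real pmf \<Rightarrow> nat set" where
  "charged_gap_nodes p q = {i \<in> gap_nodes p q. 0 < pmf p (x i)}"

definition gap_size :: "real pmf \<Rightarrow> real pmf \<Rightarrow> nat" where
  "gap_size p q = card (gap_nodes p q) + card (charged_gap_nodes p q)"

lemma gap_size_less:
  assumes "gap_nodes p' q \<subseteq> gap_nodes p q" "charged_gap_nodes p' q \<subseteq> charged_gap_nodes p q"
    and "gap_nodes p' q \<noteq> gap_nodes p q \<or> charged_gap_nodes p' q \<noteq> charged_gap_nodes p q"
  shows "gap_size p' q < gap_size p q"
proof -
  have fin: "finite (gap_nodes p q)" "finite (charged_gap_nodes p q)"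
    by (auto simp: gap_nodes_def charged_gap_nodes_def)
  show ?thesis
  proof (cases "gap_nodes p' q = gap_nodes p q")
    case True
    then have "charged_gap_nodes p' q \<subset> charged_gap_nodes p q" using assms(2,3) by auto
    then have "card (charged_gap_nodes p' q) < card (charged_gap_nodes p q)"
      by (rule psubset_card_mono[OF fin(2)])
    then show ?thesis using True by (simp add: gap_size_def)
  next
    case False
    then have "gap_nodes p' q \<subset> gap_nodes p q" using assms(1) by auto
    then have "card (gap_nodes p' q) < card (gap_nodes p q)" by (rule psubset_card_mono[OF fin(1)])
    then show ?thesis using card_mono[OF fin(2) assms(2)] by (simp add: gap_size_def)
  qed
qed

lemma obtain_spread_site:
  assumes p: "on_grid p" and q: "on_grid q"
    and le: "\<And>i. i \<le> n \<Longrightarrow> call_price p (x i) \<le> call_price q (x i)"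
    and eq0: "call_price p (x 0) = call_price q (x 0)"
    and gap: "gap_nodes p q \<noteq> {}"
  obtains a j b w where "a < j" "j < b" "b \<le> n" "0 < pmf p (x j)"
    "call_price p (x a) = call_price q (x a)" "call_price p (x b) = call_price q (x b)"
    "\<And>l. a < l \<Longrightarrow> l < b \<Longrightarrow> call_price p (x l) < call_price q (x l)"
    "0 < w" "w < 1" "x j = w * x a + (1 - w) * x b"
proof -
  define D where "D i = call_price q (x i) - call_price p (x i)" for i
  obtain i where i: "i \<le> n" "0 < D i" using gap by (auto simp: gap_nodes_def D_def)
  obtain a b where ab: "a < i" "i < b" "b \<le> n" "D a = 0" "D b = 0"
    and D_pos: "\<And>l. a < l \<Longrightarrow> l < b \<Longrightarrow> 0 < D l"
    using obtain_zeros_around_positive[of D n i] i eq0 le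
      call_price_last_node[OF p] call_price_last_node[OF q] by (auto simp: D_def)
  obtain j where j: "a < j" "j < b" "0 < pmf p (x j)"
    using mass_strictly_between[OF p q ab(1-3)] ab(4,5) i(2) by (auto simp: D_def)
  have "x a < x j" "x j < x b" using x_less j ab by auto
  then obtain w where w: "0 < w" "w < 1" "x j = w * x a + (1 - w) * x b"
    by (rule obtain_interpolation_weight)
  have "call_price p (x a) = call_price q (x a)" "call_price p (x b) = call_price q (x b)"
    using ab(4,5) by (simp_all add: D_def)
  moreover have "call_price p (x l) < call_price q (x l)" if "a < l" "l < b" for l
    using D_pos[OF that] by (simp add: D_def)
  ultimately show thesis by (rule that[OF j(1,2) ab(3) j(3) _ _ _ w])
qed

lemma call_gap_reduction:
  assumes p: "on_grid p" and q: "on_grid q"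
    and le: "\<And>i. i \<le> n \<Longrightarrow> call_price p (x i) \<le> call_price q (x i)"
    and eq0: "call_price p (x 0) = call_price q (x 0)"
    and gap: "gap_nodes p q \<noteq> {}"
  obtains \<kappa> where "martingale_kernel (x ` {..n}) p \<kappa>"
    "\<And>i. i \<le> n \<Longrightarrow> call_price (bind_pmf p \<kappa>) (x i) \<le> call_price q (x i)"
    "call_price (bind_pmf p \<kappa>) (x 0) = call_price q (x 0)"
    "gap_size (bind_pmf p \<kappa>) q < gap_size p q"
proof -
  obtain a j b w where ajb: "a < j" "j < b" "b \<le> n" and mass: "0 < pmf p (x j)"
    and eq: "call_price p (x a) = call_price q (x a)" "call_price p (x b) = call_price q (x b)"
    and less: "\<And>l. a < l \<Longrightarrow> l < b \<Longrightarrow> call_price p (x l) < call_price q (x l)"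
    and w: "0 < w" "w < 1" "x j = w * x a + (1 - w) * x b"
    using obtain_spread_site[OF assms] by blast
  define D where "D l = call_price q (x l) - call_price p (x l)" for l
  define T where "T = spread_gain w (x a) (x b)"
  have w_le: "0 \<le> w" "w \<le> 1" using w(1,2) by simp_all
  have T_nonneg: "0 \<le> T k" for k unfolding T_def by (rule spread_gain_nonneg[OF w_le])
  have T_zero: "T (x l) = 0" if "l \<le> n" "l \<le> a \<or> b \<le> l" for l
  proof -
    have "x a \<le> x b" "x l \<le> x a \<or> x b \<le> x l" using that ajb x_le by auto
    then show ?thesis unfolding T_def by (rule spread_gain_eq_0[OF w_le])
  qed
  have T_pos: "0 < T (x l)" if "a < l" "l < b" for l
  proof -
    have "x a < x l" "x l < x b" using that ajb x_less by auto
    then show ?thesis unfolding T_def by (rule spread_gain_pos[OF w(1,2)])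
  qed
  \<comment> \<open>Spread as much of the atom as possible without lifting any call price above that of \<open>q\<close>.\<close>
  obtain \<theta> where \<theta>_pos: "0 < \<theta>" and \<theta>_le: "\<theta> \<le> pmf p (x j)"
    and \<theta>_D: "\<And>l. a < l \<Longrightarrow> l < b \<Longrightarrow> \<theta> * T (x l) \<le> D l"
    and \<theta>_cases: "\<theta> = pmf p (x j) \<or> (\<exists>l. a < l \<and> l < b \<and> \<theta> * T (x l) = D l)"
    using obtain_largest_step[of "pmf p (x j)" a b D "\<lambda>l. T (x l)"] mass less T_pos
    by (auto simp: D_def)
  define \<kappa> where "\<kappa> = spread_kernel (\<theta> / pmf p (x j)) w (x a) (x b)"
  note spread = spread_on_grid[OF p ajb \<theta>_pos \<theta>_le w_le w(3), folded \<kappa>_def T_def]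
  let ?p' = "bind_pmf p \<kappa>"
  have le': "call_price ?p' (x l) \<le> call_price q (x l)" if "l \<le> n" for l
    using \<theta>_D[of l] T_zero[of l] le[OF that] that
    by (cases "a < l \<and> l < b") (auto simp: spread(2) D_def)
  have eq0': "call_price ?p' (x 0) = call_price q (x 0)"
    using T_zero[of 0] eq0 by (simp add: spread(2))
  have gap_sub: "gap_nodes ?p' q \<subseteq> gap_nodes p q"
    using T_nonneg \<theta>_pos by (auto simp: gap_nodes_def spread(2) intro: le_less_trans[rotated])
  have ab_closed: "a \<notin> gap_nodes ?p' q" "b \<notin> gap_nodes ?p' q"
    using T_zero[of a] T_zero[of b] ajb eq by (auto simp: gap_nodes_def spread(2))
  have charged_sub: "charged_gap_nodes ?p' q \<subseteq> charged_gap_nodes p q"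
    using gap_sub ab_closed spread(4) by (force simp: charged_gap_nodes_def gap_nodes_def)
  have "gap_nodes ?p' q \<noteq> gap_nodes p q \<or> charged_gap_nodes ?p' q \<noteq> charged_gap_nodes p q"
    using \<theta>_cases
  proof
    assume "\<theta> = pmf p (x j)"
    then have "j \<in> charged_gap_nodes p q" "j \<notin> charged_gap_nodes ?p' q"
      using ajb mass less[of j] spread(3) by (auto simp: charged_gap_nodes_def gap_nodes_def)
    then show ?thesis by blast
  next
    assume "\<exists>l. a < l \<and> l < b \<and> \<theta> * T (x l) = D l"
    then obtain l where l: "a < l" "l < b" "\<theta> * T (x l) = D l" by auto
    then have "l \<in> gap_nodes p q" "l \<notin> gap_nodes ?p' q"
      using ajb less[of l] T_pos[of l] by (auto simp: gap_nodes_def D_def spread(2))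
    then show ?thesis by blast
  qed
  then have "gap_size ?p' q < gap_size p q" using gap_sub charged_sub by (rule gap_size_less[rotated 2])
  then show thesis using that spread(1) le' eq0' by blast
qed

theorem martingale_coupling_on_grid:
  assumes "on_grid p" and q: "on_grid q"
    and "\<And>i. i \<le> n \<Longrightarrow> call_price p (x i) \<le> call_price q (x i)"
    and "call_price p (x 0) = call_price q (x 0)"
  shows "\<exists>\<kappa>. martingale_kernel (x ` {..n}) p \<kappa> \<and> bind_pmf p \<kappa> = q"
  using assms(1,3,4)
proof (induction "gap_size p q" arbitrary: p rule: less_induct)
  case less
  show ?case
  proof (cases "gap_nodes p q = {}")
    case True
    then have "p = q"
      using less.prems by (intro pmf_eq_if_call_prices_eq[OF _ q]) (force simp: gap_nodes_def)+
    moreover have "martingale_kernel (x ` {..n}) p return_pmf"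
      using less.prems(1) by (simp add: on_grid_def martingale_kernel_return)
    ultimately show ?thesis by (auto simp: bind_return_pmf')
  next
    case False
    obtain \<kappa> where \<kappa>: "martingale_kernel (x ` {..n}) p \<kappa>"
      "\<And>i. i \<le> n \<Longrightarrow> call_price (bind_pmf p \<kappa>) (x i) \<le> call_price q (x i)"
      "call_price (bind_pmf p \<kappa>) (x 0) = call_price q (x 0)"
      "gap_size (bind_pmf p \<kappa>) q < gap_size p q"
      using call_gap_reduction[OF less.prems(1) q less.prems(2,3) False] by blast
    have "on_grid (bind_pmf p \<kappa>)" using \<kappa>(1) by (auto simp: martingale_kernel_def on_grid_def)
    then obtain \<kappa>' where \<kappa>': "martingale_kernel (x ` {..n}) (bind_pmf p \<kappa>) \<kappa>'"
      "bind_pmf (bind_pmf p \<kappa>) \<kappa>' = q"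
      using less.hyps[OF \<kappa>(4) _ \<kappa>(2,3)] by blast
    have "martingale_kernel (x ` {..n}) p (\<lambda>y. bind_pmf (\<kappa> y) \<kappa>')"
      using martingale_kernel_bind[OF _ \<kappa>(1) \<kappa>'(1)] by simp
    moreover have "bind_pmf p (\<lambda>y. bind_pmf (\<kappa> y) \<kappa>') = q"
      using \<kappa>'(2) by (simp add: bind_assoc_pmf)
    ultimately show ?thesis by blast
  qed
qed

end

section \<open>The slices as call price functions\<close>

locale call_price_data =
  fixes N M :: nat
    and Ks :: "nat \<Rightarrow> real" and Ts :: "nat \<Rightarrow> real"
    and C :: "nat \<Rightarrow> nat \<Rightarrow> real"
    and \<alpha> :: "nat \<Rightarrow> real \<Rightarrow> real"
    and Cs :: "real \<Rightarrow> real \<Rightarrow> real"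
  assumes hM: "1 \<le> M"
    and hK0: "Ks 0 = 0" and hK: "\<And>i. i < N \<Longrightarrow> Ks i < Ks (Suc i)"
    and hT0: "Ts 0 = 0" and hT: "\<And>j. j < M \<Longrightarrow> Ts j < Ts (Suc j)"
    and hC0: "\<And>j. 1 \<le> j \<Longrightarrow> j \<le> M \<Longrightarrow> C j 0 = 1"
    and hdC0: "\<And>j. 1 \<le> j \<Longrightarrow> j \<le> M \<Longrightarrow> dC N Ks C j 0 = -1"
    and hCN: "\<And>j. 1 \<le> j \<Longrightarrow> j \<le> M \<Longrightarrow> C j N = 0"
    and hconv: "\<And>j i. 1 \<le> j \<Longrightarrow> j \<le> M \<Longrightarrow> 1 \<le> i \<Longrightarrow> i \<le> N \<Longrightarrow>
                  dC N Ks C j (i - 1) \<le> dC N Ks C j i"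
    and hcal: "\<And>j i. 1 \<le> j \<Longrightarrow> j < M \<Longrightarrow> i \<le> N \<Longrightarrow> C j i \<le> C (Suc j) i"
    and h\<alpha>mono: "\<And>j. j < M \<Longrightarrow> mono_on {Ts j..Ts (Suc j)} (\<alpha> j)"
    and h\<alpha>range: "\<And>j t. j < M \<Longrightarrow> t \<in> {Ts j..Ts (Suc j)} \<Longrightarrow> \<alpha> j t \<in> {0..1}"
    and h\<alpha>0: "\<And>j. j < M \<Longrightarrow> \<alpha> j (Ts j) = 0"
    and hCs: "\<And>j t k. j < M \<Longrightarrow> t \<in> {Ts j..Ts (Suc j)} \<Longrightarrow> 0 \<le> k \<Longrightarrow>
               Cs t k = \<alpha> j t * Cbar N Ks C (Suc j) k + (1 - \<alpha> j t) * Cbar N Ks C j k"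
begin

sublocale K: strict_grid Ks N by unfold_locales (rule hK)

abbreviation slope :: "nat \<Rightarrow> nat \<Rightarrow> real" where "slope j i \<equiv> dC N Ks C j i"

definition slope_jump :: "nat \<Rightarrow> nat \<Rightarrow> real" where
  "slope_jump j i = slope j (Suc i) - slope j i"

lemma N_pos: "0 < N"
  using hdC0[of 1] hM by (cases N) (auto simp: dC_def)

lemma slope_jump_nonneg: "1 \<le> j \<Longrightarrow> j \<le> M \<Longrightarrow> 0 \<le> slope_jump j i"
  using hconv[of j "Suc i"] by (cases "i < N") (auto simp: slope_jump_def dC_def)

lemma sum_slope_jump: "1 \<le> j \<Longrightarrow> j \<le> M \<Longrightarrow> (\<Sum>i<N. slope_jump j i) = 1"
  unfolding slope_jump_def sum_lessThan_telescope using hdC0[of j] by (simp add: dC_def)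

lemma sum_slope_jump_tail:
  assumes j: "1 \<le> j" "j \<le> M" and l: "l < N"
  shows "(\<Sum>i\<in>{l..<N}. slope_jump j i * (Ks (Suc i) - k)) = slope j l * (k - Ks (Suc l)) + C j (Suc l)"
proof -
  have "l \<le> N - 1" using l by simp
  then show ?thesis
  proof (induction l rule: inc_induct)
    case base
    have "{N - 1..<N} = {N - 1}" "Suc (N - 1) = N" "slope j N = 0" using N_pos by (auto simp: dC_def)
    then show ?case using hCN[OF j] by (simp add: slope_jump_def algebra_simps)
  next
    case (step m)
    then have m: "Suc m < N" by simp
    then have "{m..<N} = insert m {Suc m..<N}" by auto
    moreover have "slope j (Suc m) * (Ks (Suc (Suc m)) - Ks (Suc m)) = C j (Suc (Suc m)) - C j (Suc m)"
      using m hK[of "Suc m"] by (simp add: dC_def)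
    ultimately show ?case using step.IH by (simp add: slope_jump_def algebra_simps)
  qed
qed

definition jump_pmf :: "nat \<Rightarrow> nat pmf" where
  "jump_pmf j = embed_pmf (\<lambda>i. if i < N then slope_jump j i else 0)"

definition marginal :: "nat \<Rightarrow> real pmf" where
  "marginal j = (if j = 0 then return_pmf 1 else map_pmf (\<lambda>i. Ks (Suc i)) (jump_pmf j))"

lemma pmf_jump_pmf:
  assumes "1 \<le> j" "j \<le> M"
  shows "pmf (jump_pmf j) i = (if i < N then slope_jump j i else 0)"
  unfolding jump_pmf_def
proof (rule pmf_embed_pmf)
  show "(\<integral>\<^sup>+i. ennreal (if i < N then slope_jump j i else 0) \<partial>count_space UNIV) = 1"
    using assms slope_jump_nonneg
    by (subst nn_integral_count_space'[where A = "{..<N}"])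
      (auto simp: sum_ennreal sum_slope_jump)
qed (use assms slope_jump_nonneg in auto)

lemma integral_marginal:
  fixes g :: "real \<Rightarrow> real"
  assumes "1 \<le> j" "j \<le> M"
  shows "(\<integral>y. g y \<partial>marginal j) = (\<Sum>i<N. slope_jump j i * g (Ks (Suc i)))"
proof -
  have "(\<integral>y. g y \<partial>marginal j) = (\<integral>i. g (Ks (Suc i)) \<partial>jump_pmf j)"
    using assms by (simp add: marginal_def)
  also have "\<dots> = (\<Sum>i<N. g (Ks (Suc i)) * pmf (jump_pmf j) i)"
    by (rule integral_measure_pmf_real) (auto simp: set_pmf_iff pmf_jump_pmf[OF assms] split: if_splits)
  finally show ?thesis by (simp add: pmf_jump_pmf[OF assms] mult.commute)
qed

lemma set_marginal: "1 \<le> j \<Longrightarrow> j \<le> M \<Longrightarrow> set_pmf (marginal j) \<subseteq> Ks ` Suc ` {..<N}"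
  by (auto simp: marginal_def set_pmf_iff pmf_jump_pmf split: if_splits)

lemma marginal_on_grid: "1 \<le> j \<Longrightarrow> j \<le> M \<Longrightarrow> K.on_grid (marginal j)"
  using set_marginal unfolding K.on_grid_def by fastforce

lemma Cbar_on_segment:
  assumes "1 \<le> j" "l < N" "Ks l \<le> k" "k < Ks (Suc l)"
  shows "Cbar N Ks C j k = slope j l * (k - Ks (Suc l)) + C j (Suc l)"
proof -
  have "(THE i. i < N \<and> Ks i \<le> k \<and> k < Ks (Suc i)) = l"
    using assms K.segment_unique by (intro the_equality) blast+
  then show ?thesis using assms unfolding Cbar_def by (auto simp: Let_def)
qed

lemma Cbar_beyond:
  assumes "1 \<le> j" "Ks N \<le> k"
  shows "Cbar N Ks C j k = 0"
proof -
  have "\<not> (k < Ks (Suc i))" if "i < N" for i using K.x_le[of "Suc i" N] that assms by simp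
  then show ?thesis using assms unfolding Cbar_def by auto
qed

lemma Cbar_node:
  assumes j: "1 \<le> j" "j \<le> M" and i: "i \<le> N"
  shows "Cbar N Ks C j (Ks i) = C j i"
proof (cases "i < N")
  case True
  have "slope j i * (Ks (Suc i) - Ks i) = C j (Suc i) - C j i"
    using True hK[of i] by (simp add: dC_def)
  then show ?thesis using Cbar_on_segment[OF j(1) True order_refl hK[OF True]] by (simp add: algebra_simps)
next
  case False
  then show ?thesis using Cbar_beyond[OF j(1)] hCN[OF j] i by simp
qed

lemma call_price_marginal:
  assumes j: "j \<le> M" and k: "0 \<le> k"
  shows "call_price (marginal j) k = Cbar N Ks C j k"
proof (cases "j = 0")
  case True
  then show ?thesis by (simp add: call_price_def marginal_def Cbar_def max_def)
next
  case False
  then have j: "1 \<le> j" "j \<le> M" using j by auto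
  have call: "call_price (marginal j) k = (\<Sum>i<N. slope_jump j i * max (Ks (Suc i) - k) 0)"
    unfolding call_price_def by (rule integral_marginal[OF j])
  show ?thesis
  proof (cases "k < Ks N")
    case True
    moreover have "Ks 0 \<le> k" using k hK0 by simp
    ultimately obtain l where l: "l < N" "Ks l \<le> k" "k < Ks (Suc l)"
      by (metis K.obtain_segment)
    have "max (Ks (Suc i) - k) 0 = (if l \<le> i then Ks (Suc i) - k else 0)" if "i < N" for i
      using K.x_le[of "Suc l" "Suc i"] K.x_le[of "Suc i" l] that l by auto
    then have "call_price (marginal j) k = (\<Sum>i<N. if l \<le> i then slope_jump j i * (Ks (Suc i) - k) else 0)"
      unfolding call by (intro sum.cong) auto
    also have "\<dots> = (\<Sum>i\<in>{i\<in>{..<N}. l \<le> i}. slope_jump j i * (Ks (Suc i) - k))"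
      by (rule sum.inter_filter[symmetric]) simp
    also have "{i\<in>{..<N}. l \<le> i} = {l..<N}" by auto
    finally show ?thesis using sum_slope_jump_tail[OF j l(1)] Cbar_on_segment[OF j(1) l] by simp
  next
    case False
    have "max (Ks (Suc i) - k) 0 = 0" if "i < N" for i using K.x_le[of "Suc i" N] that False by simp
    then show ?thesis using call Cbar_beyond[OF j(1)] False by simp
  qed
qed

lemma call_price_marginal_node:
  "1 \<le> j \<Longrightarrow> j \<le> M \<Longrightarrow> i \<le> N \<Longrightarrow> call_price (marginal j) (Ks i) = C j i"
  using call_price_marginal Cbar_node K.x_le[of 0 i] hK0 by simp

lemma mean_marginal: "j \<le> M \<Longrightarrow> (\<integral>y. y \<partial>marginal j) = 1"
proof (cases "j = 0")
  case False
  assume "j \<le> M"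
  then have j: "1 \<le> j" "j \<le> M" using False by auto
  have "(\<integral>y. y \<partial>marginal j) = call_price (marginal j) (Ks 0)"
    unfolding call_price_def hK0 using set_marginal[OF j] K.x_less[of 0] hK0
    by (intro integral_cong_AE) (auto simp: AE_measure_pmf_iff)
  then show ?thesis using call_price_marginal_node[OF j, of 0] hC0[OF j] by simp
qed (simp add: marginal_def)

end

section \<open>The discrete-time martingale\<close>

primrec chain :: "real \<Rightarrow> (nat \<Rightarrow> real \<Rightarrow> real pmf) \<Rightarrow> nat \<Rightarrow> (nat \<Rightarrow> real) pmf" where
  "chain z \<kappa> 0 = return_pmf (\<lambda>_. z)"
| "chain z \<kappa> (Suc k) = bind_pmf (chain z \<kappa> k) (\<lambda>w. map_pmf (\<lambda>y. w(Suc k := y)) (\<kappa> k (w k)))"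

definition cut_after :: "real \<Rightarrow> nat \<Rightarrow> (nat \<Rightarrow> real) \<Rightarrow> nat \<Rightarrow> real" where
  "cut_after z m w = (\<lambda>i. if i \<le> m then w i else z)"

lemma chain_beyond: "w \<in> set_pmf (chain z \<kappa> k) \<Longrightarrow> k < i \<Longrightarrow> w i = z"
proof (induction k arbitrary: w)
  case (Suc k)
  then obtain w' y where "w' \<in> set_pmf (chain z \<kappa> k)" "w = w'(Suc k := y)" by auto
  then show ?case using Suc by auto
qed simp

lemma map_cut_after_chain: "m \<le> l \<Longrightarrow> map_pmf (cut_after z m) (chain z \<kappa> l) = chain z \<kappa> m"
proof (induction l rule: dec_induct)
  case base
  have "map_pmf (cut_after z m) (chain z \<kappa> m) = map_pmf id (chain z \<kappa> m)"
    by (intro map_pmf_cong refl) (auto simp: cut_after_def fun_eq_iff chain_beyond)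
  then show ?case by simp
next
  case (step l)
  have "map_pmf (cut_after z m) (chain z \<kappa> (Suc l)) =
        bind_pmf (chain z \<kappa> l) (\<lambda>w. map_pmf (\<lambda>y. cut_after z m (w(Suc l := y))) (\<kappa> l (w l)))"
    by (simp add: map_bind_pmf map_pmf_comp)
  also have "\<dots> = bind_pmf (chain z \<kappa> l) (\<lambda>w. map_pmf (\<lambda>_. cut_after z m w) (\<kappa> l (w l)))"
    using step.hyps by (intro bind_pmf_cong refl map_pmf_cong) (auto simp: cut_after_def fun_eq_iff)
  also have "\<dots> = map_pmf (cut_after z m) (chain z \<kappa> l)"
    by (simp add: map_pmf_const map_pmf_def)
  finally show ?case using step.IH by simp
qed

context call_price_data
begin

definition martingale_transition :: "nat \<Rightarrow> (real \<Rightarrow> real pmf) \<Rightarrow> bool" where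
  "martingale_transition j \<kappa> \<longleftrightarrow>
     martingale_kernel (Ks ` {..N}) (marginal j) \<kappa> \<and> bind_pmf (marginal j) \<kappa> = marginal (Suc j)"

lemma martingale_transition_exists:
  assumes "j < M"
  shows "\<exists>\<kappa>. martingale_transition j \<kappa>"
proof (cases "j = 0")
  case True
  have "set_pmf (marginal 1) \<subseteq> Ks ` {..N}" using set_marginal[of 1] hM by fastforce
  then have "martingale_transition 0 (\<lambda>_. marginal 1)"
    using mean_marginal[of 1] hM by (simp add: martingale_transition_def martingale_kernel_def marginal_def)
  then show ?thesis using True by blast
next
  case False
  then have j: "1 \<le> j" "j \<le> M" "1 \<le> Suc j" "Suc j \<le> M" using assms by auto
  show ?thesis
    using K.martingale_coupling_on_grid[OF marginal_on_grid[OF j(1,2)] marginal_on_grid[OF j(3,4)]]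
      call_price_marginal_node[OF j(1,2)] call_price_marginal_node[OF j(3,4)]
      hcal[OF j(1) assms] hC0[OF j(1,2)] hC0[OF j(3,4)]
    by (simp add: martingale_transition_def)
qed

definition step_kernel :: "nat \<Rightarrow> real \<Rightarrow> real pmf" where
  "step_kernel j = (SOME \<kappa>. martingale_transition j \<kappa>)"

lemma martingale_transition_step_kernel: "j < M \<Longrightarrow> martingale_transition j (step_kernel j)"
  unfolding step_kernel_def using martingale_transition_exists by (rule someI_ex)

lemma step_kernel_on_support:
  assumes "j < M" "y \<in> set_pmf (marginal j)"
  shows "finite (set_pmf (step_kernel j y))" "(\<integral>z. z \<partial>step_kernel j y) = y"
proof -
  have "set_pmf (step_kernel j y) \<subseteq> Ks ` {..N}" "(\<integral>z. z \<partial>step_kernel j y) = y"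
    using martingale_transition_step_kernel[OF assms(1)] assms(2)
    by (auto simp: martingale_transition_def martingale_kernel_def)
  then show "finite (set_pmf (step_kernel j y))" "(\<integral>z. z \<partial>step_kernel j y) = y"
    by (auto intro: finite_subset)
qed

lemma marginal_chain: "k \<le> M \<Longrightarrow> map_pmf (\<lambda>w. w k) (chain 1 step_kernel k) = marginal k"
proof (induction k)
  case (Suc k)
  then have "k < M" by simp
  have "map_pmf (\<lambda>w. w (Suc k)) (chain 1 step_kernel (Suc k)) =
      bind_pmf (chain 1 step_kernel k) (\<lambda>w. step_kernel k (w k))"
    by (simp add: map_bind_pmf map_pmf_comp)
  also have "\<dots> = bind_pmf (map_pmf (\<lambda>w. w k) (chain 1 step_kernel k)) (step_kernel k)"
    by (simp add: bind_map_pmf)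
  also have "\<dots> = marginal (Suc k)"
    using Suc martingale_transition_step_kernel[OF \<open>k < M\<close>] by (simp add: martingale_transition_def)
  finally show ?case .
qed (simp add: marginal_def)

lemma chain_in_marginal:
  assumes "k \<le> l" "l \<le> M" "w \<in> set_pmf (chain 1 step_kernel l)"
  shows "w k \<in> set_pmf (marginal k)"
proof -
  have "cut_after 1 k w \<in> set_pmf (map_pmf (cut_after 1 k) (chain 1 step_kernel l))"
    using assms(3) by simp
  then have "cut_after 1 k w \<in> set_pmf (chain 1 step_kernel k)"
    by (simp only: map_cut_after_chain[OF assms(1)])
  then have "cut_after 1 k w k \<in> set_pmf (map_pmf (\<lambda>w. w k) (chain 1 step_kernel k))"
    by simp
  then show ?thesis using marginal_chain assms by (simp add: cut_after_def)
qed

lemma marginal_chain_M: "k \<le> M \<Longrightarrow> map_pmf (\<lambda>w. w k) (chain 1 step_kernel M) = marginal k"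
proof -
  assume k: "k \<le> M"
  have "map_pmf (\<lambda>w. w k) (chain 1 step_kernel M) =
      map_pmf (\<lambda>w. w k) (map_pmf (cut_after 1 k) (chain 1 step_kernel M))"
    by (simp add: map_pmf_comp cut_after_def)
  then show ?thesis using map_cut_after_chain[OF k] marginal_chain[OF k] by simp
qed

lemma finite_chain: "k \<le> M \<Longrightarrow> finite (set_pmf (chain 1 step_kernel k))"
proof (induction k)
  case (Suc k)
  then have k: "k < M" "k \<le> M" by auto
  have "finite (set_pmf (step_kernel k (w k)))" if "w \<in> set_pmf (chain 1 step_kernel k)" for w
    using step_kernel_on_support(1)[OF k(1) chain_in_marginal[OF order_refl k(2) that]] .
  then show ?case using Suc.IH k by simp
qed simp

lemma integral_chain_increment:
  fixes G :: "(nat \<Rightarrow> real) \<Rightarrow> real"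
  assumes mk: "m \<le> k" "k < M"
    and G: "\<And>w w'. (\<forall>i\<le>m. w i = w' i) \<Longrightarrow> G w = G w'"
  shows "(\<integral>w. G w * (w (Suc k) - w k) \<partial>chain 1 step_kernel M) = 0"
proof -
  let ?f = "\<lambda>w. G w * (w (Suc k) - w k)"
  have "?f (cut_after 1 (Suc k) w) = ?f w" for w
    using mk G[of "cut_after 1 (Suc k) w" w] by (simp add: cut_after_def)
  then have "(\<integral>w. ?f w \<partial>chain 1 step_kernel M) =
      (\<integral>w. ?f w \<partial>map_pmf (cut_after 1 (Suc k)) (chain 1 step_kernel M))"
    by simp
  also have "\<dots> = (\<integral>w. ?f w \<partial>chain 1 step_kernel (Suc k))"
    using map_cut_after_chain[of "Suc k" M] mk by simp
  also have "\<dots> = (\<integral>w. (\<integral>w'. ?f w' \<partial>map_pmf (\<lambda>y. w(Suc k := y)) (step_kernel k (w k))) \<partial>chain 1 step_kernel k)"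
    unfolding chain.simps using mk step_kernel_on_support(1) chain_in_marginal[of k k]
    by (intro integral_bind_pmf_finite finite_chain) auto
  also have "\<dots> = (\<integral>w. 0 \<partial>chain 1 step_kernel k)"
  proof (intro integral_cong_AE AE_pmfI)
    fix w assume w: "w \<in> set_pmf (chain 1 step_kernel k)"
    then have y: "w k \<in> set_pmf (marginal k)" using chain_in_marginal[of k k] mk by simp
    have "G (w(Suc k := y)) = G w" for y using mk by (intro G) auto
    then have "(\<integral>w'. ?f w' \<partial>map_pmf (\<lambda>y. w(Suc k := y)) (step_kernel k (w k)))
        = G w * ((\<integral>y. y \<partial>step_kernel k (w k)) - w k)"
      using step_kernel_on_support[OF mk(2) y] by (simp add: integrable_measure_pmf_finite)
    then show "(\<integral>w'. ?f w' \<partial>map_pmf (\<lambda>y. w(Suc k := y)) (step_kernel k (w k))) = 0"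
      using step_kernel_on_support(2)[OF mk(2) y] by simp
  qed simp_all
  finally show ?thesis by simp
qed

end

section \<open>The continuous-time price process\<close>

definition path_space :: "(real \<Rightarrow> real) measure" where
  "path_space = PiM UNIV (\<lambda>_. borel)"

definition uniform01 :: "real measure" where
  "uniform01 = restrict_space lborel {0..<1}"

lemma space_path_space [simp]: "space path_space = UNIV"
  by (simp add: path_space_def space_PiM)

lemma space_uniform01 [simp]: "space uniform01 = {0..<1}"
  by (simp add: uniform01_def space_restrict_space)

lemma prob_space_uniform01: "prob_space uniform01"
  by (rule prob_spaceI) (simp add: uniform01_def emeasure_restrict_space)

lemma measurable_path_coordinate [measurable]: "(\<lambda>w. w r) \<in> borel_measurable path_space"
  unfolding path_space_def by measurable

lemma measurable_into_path_space:
  assumes "\<And>r. (\<lambda>x. f x r) \<in> borel_measurable N"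
  shows "f \<in> N \<rightarrow>\<^sub>M path_space"
  unfolding path_space_def
  by (rule measurable_PiM_single'[of UNIV "\<lambda>r x. f x r", simplified]) (use assms in auto)

lemma measurable_fst_uniform01 [measurable]:
  "fst \<in> borel_measurable (uniform01 \<Otimes>\<^sub>M measure_pmf p)"
proof -
  have "(\<lambda>u. u) \<in> uniform01 \<rightarrow>\<^sub>M borel"
    unfolding uniform01_def by (rule measurable_restrict_space1) simp
  then show ?thesis using measurable_fst by (rule measurable_compose[rotated])
qed

lemma measurable_snd_pmf [measurable]:
  "(\<lambda>q. g (snd q)) \<in> borel_measurable (uniform01 \<Otimes>\<^sub>M measure_pmf p)"
  by (rule measurable_compose[OF measurable_snd]) simp

lemma integral_uniform01_step:
  fixes a c0 c1 :: real
  assumes a: "0 \<le> a" "a \<le> 1"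
  shows "(\<integral>u. (if u < a then c1 else c0) \<partial>uniform01) = a * c1 + (1 - a) * c0"
proof -
  interpret U: prob_space uniform01 by (rule prob_space_uniform01)
  have step: "(\<lambda>u. if u < a then c1 else c0) = (\<lambda>u. c0 + (c1 - c0) * indicator {..<a} u)"
    by (auto simp: fun_eq_iff indicator_def)
  have "{..<a} \<inter> space uniform01 = {0..<a}" using a by auto
  moreover have "measure uniform01 {0..<a} = a"
    unfolding uniform01_def using a by (subst measure_restrict_space) auto
  ultimately have "U.prob ({..<a} \<inter> space uniform01) = a" by simp
  moreover have "integrable uniform01 (indicator {..<a} :: real \<Rightarrow> real)"
  proof (rule U.integrable_const_bound[where B = 1])
    show "AE u in uniform01. norm (indicator {..<a} u :: real) \<le> 1"
      by (intro AE_I2) (auto simp: indicator_def)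
    show "(indicator {..<a} :: real \<Rightarrow> real) \<in> borel_measurable uniform01"
      unfolding uniform01_def by (intro measurable_restrict_space1) measurable
  qed
  moreover have "U.prob {0..<1} = 1" using U.prob_space by simp
  ultimately show ?thesis unfolding step by (simp add: algebra_simps)
qed

context call_price_data
begin

sublocale T: strict_grid Ts M by unfold_locales (rule hT)

definition period :: "real \<Rightarrow> nat" where
  "period t = Max {j. j < M \<and> Ts j \<le> t}"

lemma period:
  assumes t: "0 \<le> t" "t \<le> Ts M"
  shows "period t < M" "Ts (period t) \<le> t" "t \<le> Ts (Suc (period t))"
proof -
  let ?S = "{j. j < M \<and> Ts j \<le> t}"
  have "0 \<in> ?S" using hM hT0 t by simp
  then have "period t \<in> ?S" unfolding period_def by (intro Max_in) auto
  then show "period t < M" "Ts (period t) \<le> t" by auto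
  show "t \<le> Ts (Suc (period t))"
  proof (cases "Suc (period t) < M")
    case True
    show ?thesis
    proof (rule ccontr)
      assume "\<not> t \<le> Ts (Suc (period t))"
      then have "Suc (period t) \<le> period t" using True unfolding period_def by (intro Max_ge) auto
      then show False by simp
    qed
  next
    case False
    then have "Suc (period t) = M" using \<open>period t < M\<close> by simp
    then show ?thesis using t by simp
  qed
qed

lemma period_mono:
  assumes "0 \<le> s" "s \<le> t"
  shows "period s \<le> period t"
proof -
  have "0 \<in> {j. j < M \<and> Ts j \<le> s}" using hM hT0 assms by simp
  then show ?thesis unfolding period_def using assms by (intro Max_mono) auto
qed

lemma period_0: "period 0 = 0"
  using period[of 0] hT0 T.x_le[of 0 M] T.x_less[of 0 "period 0"] by (cases "period 0") auto

definition level :: "real \<Rightarrow> real \<Rightarrow> nat" where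
  "level t u = period t + (if u < \<alpha> (period t) t then 1 else 0)"

lemma level_le: "0 \<le> t \<Longrightarrow> t \<le> Ts M \<Longrightarrow> level t u \<le> M"
  using period(1)[of t] by (auto simp: level_def)

lemma level_mono:
  assumes "0 \<le> s" "s \<le> t" "t \<le> Ts M"
  shows "level s u \<le> level t u"
proof (cases "period s = period t")
  case True
  then have "s \<in> {Ts (period s)..Ts (Suc (period s))}" "t \<in> {Ts (period s)..Ts (Suc (period s))}"
    using period[of s] period[of t] assms by auto
  then have "\<alpha> (period s) s \<le> \<alpha> (period s) t"
    using h\<alpha>mono[of "period s"] period(1)[of s] assms by (auto simp: mono_on_def)
  then show ?thesis using True by (auto simp: level_def)
next
  case False
  then have "period s < period t" using period_mono[of s t] assms by simp
  then show ?thesis by (auto simp: level_def)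
qed

lemma level_0: "0 \<le> u \<Longrightarrow> level 0 u = 0"
  using h\<alpha>0[of 0] hM hT0 by (simp add: level_def period_0)

text \<open>A sample path carries the coin \<open>u\<close> at negative times and the value of the chain at step \<open>i\<close>
  on \<open>[i, i + 1)\<close>; the price at time \<open>t\<close> is read off at step \<open>level t u\<close>.\<close>

definition encode :: "real \<Rightarrow> (nat \<Rightarrow> real) \<Rightarrow> real \<Rightarrow> real" where
  "encode u w = (\<lambda>r. if r < 0 then u else w (nat \<lfloor>r\<rfloor>))"

definition price :: "real \<Rightarrow> (real \<Rightarrow> real) \<Rightarrow> real" where
  "price t w = w (real (level t (w (-1))))"

definition stopped :: "real \<Rightarrow> (real \<Rightarrow> real) \<Rightarrow> real \<Rightarrow> real" where
  "stopped s w = (\<lambda>r. if r \<le> real (level s (w (-1))) then w r else 0)"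

text \<open>Off the finite support of the chain a fixed path of the support is used instead, so that
  prices are bounded on the whole sample space and not only almost surely.\<close>

definition into_support :: "(nat \<Rightarrow> real) \<Rightarrow> nat \<Rightarrow> real" where
  "into_support w =
     (if w \<in> set_pmf (chain 1 step_kernel M) then w else (SOME w. w \<in> set_pmf (chain 1 step_kernel M)))"

definition sample_path :: "real \<times> (nat \<Rightarrow> real) \<Rightarrow> real \<Rightarrow> real" where
  "sample_path q = encode (fst q) (into_support (snd q))"

definition coin_chain :: "(real \<times> (nat \<Rightarrow> real)) measure" where
  "coin_chain = uniform01 \<Otimes>\<^sub>M measure_pmf (chain 1 step_kernel M)"

definition path_measure :: "(real \<Rightarrow> real) measure" where
  "path_measure = distr coin_chain path_space sample_path"

definition stopped_filtration :: "real \<Rightarrow> (real \<Rightarrow> real) measure" where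
  "stopped_filtration s = vimage_algebra UNIV (stopped s) path_space"

lemma price_encode: "price t (encode u w) = w (level t u)"
  by (simp add: price_def encode_def del: of_nat_Suc)

lemma price_stopped: "price s (stopped s w) = price s w"
  by (simp add: price_def stopped_def level_def del: of_nat_Suc)

lemma stopped_stopped:
  assumes "0 \<le> s" "s \<le> t" "t \<le> Ts M"
  shows "stopped s (stopped t w) = stopped s w"
proof -
  have "stopped t w (-1) = w (-1)" by (simp add: stopped_def)
  then show ?thesis using level_mono[OF assms, of "w (-1)"] by (auto simp: stopped_def fun_eq_iff)
qed

lemma measurable_sample_path [measurable]: "sample_path \<in> coin_chain \<rightarrow>\<^sub>M path_space"
  unfolding coin_chain_def sample_path_def encode_def by (rule measurable_into_path_space) measurable

lemma measurable_price [measurable]: "price t \<in> borel_measurable path_space"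
proof -
  have "price t = (\<lambda>w. if w (-1) < \<alpha> (period t) t then w (real (Suc (period t))) else w (real (period t)))"
    by (simp add: fun_eq_iff price_def level_def add.commute)
  then show ?thesis by (simp only:) measurable
qed

lemma measurable_stopped [measurable]: "stopped s \<in> path_space \<rightarrow>\<^sub>M path_space"
  unfolding stopped_def level_def by (rule measurable_into_path_space) measurable

end

context call_price_data
begin

definition price_bound :: real where
  "price_bound = max 1 (Ks N)"

lemma chain_bounds:
  assumes "w \<in> set_pmf (chain 1 step_kernel M)"
  shows "0 < w i" "w i \<le> price_bound"
proof -
  have "0 < w i \<and> w i \<le> price_bound"
  proof (cases "i \<le> M")
    case True
    then have wi: "w i \<in> set_pmf (marginal i)" using chain_in_marginal[OF True order_refl assms] by simp
    show ?thesis
    proof (cases "i = 0")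
      case True
      then show ?thesis using wi by (simp add: marginal_def price_bound_def)
    next
      case False
      then obtain l where "l < N" "w i = Ks (Suc l)" using set_marginal[of i] \<open>i \<le> M\<close> wi by auto
      then show ?thesis using K.x_less[of 0 "Suc l"] K.x_le[of "Suc l" N] hK0 by (simp add: price_bound_def)
    qed
  next
    case False
    then show ?thesis using chain_beyond[OF assms, of i] by (simp add: price_bound_def)
  qed
  then show "0 < w i" "w i \<le> price_bound" by auto
qed

lemma into_support: "into_support w \<in> set_pmf (chain 1 step_kernel M)"
  unfolding into_support_def
  using set_pmf_not_empty[of "chain 1 step_kernel M"] some_in_eq[of "set_pmf (chain 1 step_kernel M)"] by auto

lemma integral_into_support:
  "(\<integral>w. f (into_support w) \<partial>chain 1 step_kernel M) = (\<integral>w. f w \<partial>chain 1 step_kernel M)"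
  by (intro integral_cong_AE) (auto simp: AE_measure_pmf_iff into_support_def)

lemma price_sample_path: "price t (sample_path q) = into_support (snd q) (level t (fst q))"
  by (simp add: sample_path_def price_encode)

lemma price_sample_path_bounds: "0 < price t (sample_path q)" "price t (sample_path q) \<le> price_bound"
  using chain_bounds[OF into_support] by (simp_all add: price_sample_path)

lemma pair_prob_space_coin_chain: "pair_prob_space uniform01 (measure_pmf (chain 1 step_kernel M))"
proof -
  interpret U: prob_space uniform01 by (rule prob_space_uniform01)
  show ?thesis
    by (intro pair_prob_space.intro pair_sigma_finite.intro U.prob_space_axioms
        measure_pmf.prob_space_axioms U.sigma_finite_measure_axioms
        measure_pmf.sigma_finite_measure_axioms)
qed

lemma prob_space_coin_chain: "prob_space coin_chain"
proof -
  interpret pair_prob_space uniform01 "measure_pmf (chain 1 step_kernel M)"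
    by (rule pair_prob_space_coin_chain)
  show ?thesis unfolding coin_chain_def by (rule P.prob_space_axioms)
qed

lemma prob_space_path_measure: "prob_space path_measure"
  unfolding path_measure_def by (rule prob_space.prob_space_distr[OF prob_space_coin_chain]) simp

lemma integrable_coin_chain:
  fixes h :: "real \<times> (nat \<Rightarrow> real) \<Rightarrow> real"
  assumes "h \<in> borel_measurable coin_chain" and "\<And>q. q \<in> space coin_chain \<Longrightarrow> \<bar>h q\<bar> \<le> B"
  shows "integrable coin_chain h"
proof -
  interpret prob_space coin_chain by (rule prob_space_coin_chain)
  show ?thesis using assms by (intro integrable_const_bound[where B = B] AE_I2) auto
qed

lemma integral_coin_chain:
  fixes h :: "real \<times> (nat \<Rightarrow> real) \<Rightarrow> real"
  assumes "h \<in> borel_measurable coin_chain" and "\<And>q. q \<in> space coin_chain \<Longrightarrow> \<bar>h q\<bar> \<le> B"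
  shows "integral\<^sup>L coin_chain h = (\<integral>u. (\<integral>w. h (u, w) \<partial>chain 1 step_kernel M) \<partial>uniform01)"
proof -
  interpret pair_prob_space uniform01 "measure_pmf (chain 1 step_kernel M)"
    by (rule pair_prob_space_coin_chain)
  show ?thesis
    using integrable_coin_chain[OF assms] unfolding coin_chain_def by (rule integral_fst'[symmetric])
qed

lemma call_price_path_measure:
  assumes t: "0 \<le> t" "t \<le> Ts M" and k: "0 \<le> k"
  shows "(\<integral>w. max (price t w - k) 0 \<partial>path_measure) = Cs t k"
proof -
  let ?j = "period t" and ?a = "\<alpha> (period t) t"
  have j: "?j < M" "t \<in> {Ts ?j..Ts (Suc ?j)}" using period[OF t] by auto
  have a: "0 \<le> ?a" "?a \<le> 1" using h\<alpha>range[OF j] by auto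
  have inner: "(\<integral>w. max (price t (sample_path (u, w)) - k) 0 \<partial>chain 1 step_kernel M)
      = call_price (marginal (level t u)) k" for u
    using integral_into_support[of "\<lambda>w. max (w (level t u) - k) 0"]
    unfolding call_price_def marginal_chain_M[OF level_le[OF t], symmetric]
    by (simp add: price_sample_path)
  have "(\<integral>w. max (price t w - k) 0 \<partial>path_measure) = (\<integral>q. max (price t (sample_path q) - k) 0 \<partial>coin_chain)"
    unfolding path_measure_def by (rule integral_distr) measurable
  also have "\<dots> = (\<integral>u. (\<integral>w. max (price t (sample_path (u, w)) - k) 0 \<partial>chain 1 step_kernel M) \<partial>uniform01)"
  proof (rule integral_coin_chain[where B = price_bound])
    fix q
    show "\<bar>max (price t (sample_path q) - k) 0\<bar> \<le> price_bound"
      using price_sample_path_bounds[of t q] k by auto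
  qed measurable
  also have "\<dots> = (\<integral>u. (if u < ?a then call_price (marginal (Suc ?j)) k
                         else call_price (marginal ?j) k) \<partial>uniform01)"
    by (intro Bochner_Integration.integral_cong refl) (simp add: inner level_def)
  also have "\<dots> = ?a * call_price (marginal (Suc ?j)) k + (1 - ?a) * call_price (marginal ?j) k"
    using a by (rule integral_uniform01_step)
  also have "\<dots> = Cs t k"
    using hCs[OF j k] call_price_marginal j(1) k by simp
  finally show ?thesis .
qed

lemma integrable_price: "integrable path_measure (price t)"
proof -
  have "integrable coin_chain (\<lambda>q. price t (sample_path q))"
  proof (rule integrable_coin_chain[where B = price_bound])
    fix q
    show "\<bar>price t (sample_path q)\<bar> \<le> price_bound" using price_sample_path_bounds[of t q] by simp
  qed measurable
  then show ?thesis unfolding path_measure_def by (subst integrable_distr_eq) auto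
qed

lemma price_pos: "AE w in path_measure. 0 < price t w"
  unfolding path_measure_def
proof (subst AE_distr_iff)
  show "AE q in coin_chain. 0 < price t (sample_path q)"
    using price_sample_path_bounds(1) by simp
qed measurable

lemma price_0: "AE w in path_measure. price 0 w = 1"
  unfolding path_measure_def
proof (subst AE_distr_iff)
  show "AE q in coin_chain. price 0 (sample_path q) = 1"
  proof (rule AE_I2)
    fix q assume "q \<in> space coin_chain"
    then have "level 0 (fst q) = 0" by (intro level_0) (auto simp: coin_chain_def space_pair_measure)
    moreover have "into_support (snd q) 0 \<in> set_pmf (marginal 0)"
      using chain_in_marginal[OF _ _ into_support] by simp
    ultimately show "price 0 (sample_path q) = 1" by (simp add: price_sample_path marginal_def)
  qed
qed measurable

end

context call_price_data
begin

lemma space_path_measure [simp]: "space path_measure = UNIV"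
  by (simp add: path_measure_def)

lemma sets_path_measure [simp]: "sets path_measure = sets path_space"
  by (simp add: path_measure_def)

lemma sets_stopped_filtration: "sets (stopped_filtration s) = {stopped s -` A | A. A \<in> sets path_space}"
  unfolding stopped_filtration_def by (subst sets_vimage_algebra2) auto

lemma stopped_vimage_in_sets: "A \<in> sets path_space \<Longrightarrow> stopped s -` A \<in> sets path_space"
  using measurable_sets[OF measurable_stopped] by simp

lemma subalgebra_stopped_filtration: "subalgebra path_measure (stopped_filtration s)"
proof -
  have "sets (stopped_filtration s) \<subseteq> sets path_measure"
    using stopped_vimage_in_sets by (auto simp: sets_stopped_filtration)
  then show ?thesis by (simp add: subalgebra_def stopped_filtration_def)
qed

lemma stopped_filtration_mono:
  assumes "0 \<le> s" "s \<le> t" "t \<le> Ts M"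
  shows "sets (stopped_filtration s) \<subseteq> sets (stopped_filtration t)"
proof
  fix A assume "A \<in> sets (stopped_filtration s)"
  then obtain B where B: "B \<in> sets path_space" "A = stopped s -` B" by (auto simp: sets_stopped_filtration)
  then have "A = stopped t -` (stopped s -` B)" using stopped_stopped[OF assms] by auto
  then show "A \<in> sets (stopped_filtration t)"
    using stopped_vimage_in_sets[OF B(1)] by (auto simp: sets_stopped_filtration)
qed

lemma measurable_price_stopped_filtration: "price s \<in> borel_measurable (stopped_filtration s)"
proof -
  have "stopped s \<in> stopped_filtration s \<rightarrow>\<^sub>M path_space"
    unfolding stopped_filtration_def by (rule measurable_vimage_algebra1) simp
  then have "(\<lambda>w. price s (stopped s w)) \<in> borel_measurable (stopped_filtration s)" by measurable
  then show ?thesis by (simp add: price_stopped)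
qed

lemma set_integral_price_stopped:
  assumes B: "B \<in> sets path_space"
  shows "(\<integral>w\<in>stopped s -` B. price r w \<partial>path_measure) =
    (\<integral>u. (\<integral>w. indicator B (stopped s (encode u w)) * w (level r u) \<partial>chain 1 step_kernel M) \<partial>uniform01)"
proof -
  have "(\<integral>w\<in>stopped s -` B. price r w \<partial>path_measure) =
      (\<integral>w. indicator B (stopped s w) * price r w \<partial>path_measure)"
    by (simp add: set_lebesgue_integral_def indicator_def)
  also have "\<dots> = (\<integral>q. indicator B (stopped s (sample_path q)) * price r (sample_path q) \<partial>coin_chain)"
    unfolding path_measure_def using B by (intro integral_distr) auto
  also have "\<dots> = (\<integral>u. (\<integral>w. indicator B (stopped s (sample_path (u, w))) * price r (sample_path (u, w))
                        \<partial>chain 1 step_kernel M) \<partial>uniform01)"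
  proof (rule integral_coin_chain[where B = price_bound])
    show "(\<lambda>q. indicator B (stopped s (sample_path q)) * price r (sample_path q)) \<in> borel_measurable coin_chain"
      using B by measurable
    fix q
    show "\<bar>indicator B (stopped s (sample_path q)) * price r (sample_path q)\<bar> \<le> price_bound"
      using price_sample_path_bounds[of r q] by (auto simp: indicator_def price_bound_def)
  qed
  also have "\<dots> =
      (\<integral>u. (\<integral>w. indicator B (stopped s (encode u w)) * w (level r u) \<partial>chain 1 step_kernel M) \<partial>uniform01)"
  proof (rule Bochner_Integration.integral_cong[OF refl])
    fix u
    show "(\<integral>w. indicator B (stopped s (sample_path (u, w))) * price r (sample_path (u, w))
            \<partial>chain 1 step_kernel M) =
        (\<integral>w. indicator B (stopped s (encode u w)) * w (level r u) \<partial>chain 1 step_kernel M)"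
      using integral_into_support[of "\<lambda>w. indicator B (stopped s (encode u w)) * w (level r u)"]
      by (simp add: sample_path_def price_encode)
  qed
  finally show ?thesis .
qed

lemma integral_chain_stopped:
  assumes st: "0 \<le> s" "s \<le> t" "t \<le> Ts M"
  shows "(\<integral>w. indicator B (stopped s (encode u w)) * w (level t u) \<partial>chain 1 step_kernel M)
       = (\<integral>w. indicator B (stopped s (encode u w)) * w (level s u) \<partial>chain 1 step_kernel M)"
proof -
  define m where "m = level s u"
  define n where "n = level t u"
  have mn: "m \<le> n" "n \<le> M" using level_mono[OF st] level_le[of t u] st by (auto simp: m_def n_def)
  define G where "G w = (indicator B (stopped s (encode u w)) :: real)" for w
  have G: "G w = G w'" if "\<forall>i\<le>m. w i = w' i" for w w'
  proof -
    have "nat \<lfloor>r\<rfloor> \<le> m" if "0 \<le> r" "r \<le> real m" for r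
      using that by (simp add: nat_le_iff floor_le_iff)
    then have "stopped s (encode u w) = stopped s (encode u w')"
      using that by (auto simp: stopped_def encode_def m_def fun_eq_iff)
    then show ?thesis by (simp add: G_def)
  qed
  have fin: "finite (set_pmf (chain 1 step_kernel M))" by (rule finite_chain) simp
  have "(\<integral>w. G w * w n \<partial>chain 1 step_kernel M) - (\<integral>w. G w * w m \<partial>chain 1 step_kernel M)
      = (\<integral>w. G w * (w n - w m) \<partial>chain 1 step_kernel M)"
    using fin by (simp add: integrable_measure_pmf_finite right_diff_distrib)
  also have "\<dots> = (\<integral>w. (\<Sum>k\<in>{m..<n}. G w * (w (Suc k) - w k)) \<partial>chain 1 step_kernel M)"
    using mn by (simp add: sum_distrib_left[symmetric] sum_Suc_diff')
  also have "\<dots> = (\<Sum>k\<in>{m..<n}. (\<integral>w. G w * (w (Suc k) - w k) \<partial>chain 1 step_kernel M))"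
    by (rule Bochner_Integration.integral_sum) (simp add: integrable_measure_pmf_finite[OF fin])
  also have "\<dots> = 0"
    using mn G by (intro sum.neutral ballI integral_chain_increment) auto
  finally show ?thesis by (simp add: G_def m_def n_def)
qed

lemma martingale_price:
  assumes st: "0 \<le> s" "s \<le> t" "t \<le> Ts M"
  shows "AE w in path_measure. real_cond_exp path_measure (stopped_filtration s) (price t) w = price s w"
proof -
  interpret P: prob_space path_measure by (rule prob_space_path_measure)
  interpret finite_measure_subalgebra path_measure "stopped_filtration s"
    by (intro finite_measure_subalgebra.intro P.finite_measure_axioms
        finite_measure_subalgebra_axioms.intro subalgebra_stopped_filtration)
  show ?thesis
  proof (rule real_cond_exp_charact)
    fix A assume "A \<in> sets (stopped_filtration s)"
    then obtain B where "B \<in> sets path_space" "A = stopped s -` B" by (auto simp: sets_stopped_filtration)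
    then show "(\<integral>w\<in>A. price t w \<partial>path_measure) = (\<integral>w\<in>A. price s w \<partial>path_measure)"
      using integral_chain_stopped[OF st] by (simp add: set_integral_price_stopped)
  qed (auto simp: integrable_price measurable_price_stopped_filtration)
qed

theorem call_surface_arbitrage_free: "arbitrage_free_call_surface {0..Ts M} Cs"
  unfolding arbitrage_free_call_surface_def
proof (intro exI conjI)
  show "prob_space path_measure" by (rule prob_space_path_measure)
  show "is_martingale path_measure {0..Ts M} stopped_filtration price"
    unfolding is_martingale_def is_filtration_def
    using subalgebra_stopped_filtration stopped_filtration_mono integrable_price
      measurable_price_stopped_filtration
      martingale_price by auto
  show "AE w in path_measure. price 0 w = 1" by (rule price_0)
  show "\<forall>t\<in>{0..Ts M}. AE w in path_measure. price t w > 0" using price_pos by auto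
  show "\<forall>t\<in>{0..Ts M}. \<forall>k\<ge>0. Cs t k = (\<integral>w. max (price t w - k) 0 \<partial>path_measure)"
    using call_price_path_measure by auto
qed

end

theorem proposition2p5:
  fixes N M :: nat
    and Ks :: "nat \<Rightarrow> real" and Ts :: "nat \<Rightarrow> real"
    and C :: "nat \<Rightarrow> nat \<Rightarrow> real"
    and \<alpha> :: "nat \<Rightarrow> real \<Rightarrow> real"
    and Cs :: "real \<Rightarrow> real \<Rightarrow> real"
  assumes hM: "1 \<le> M"
    and hK0: "Ks 0 = 0" and hK: "\<And>i. i < N \<Longrightarrow> Ks i < Ks (Suc i)"
    and hT0: "Ts 0 = 0" and hT: "\<And>j. j < M \<Longrightarrow> Ts j < Ts (Suc j)"
    and hC0: "\<And>j. 1 \<le> j \<Longrightarrow> j \<le> M \<Longrightarrow> C j 0 = 1"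
    and hdC0: "\<And>j. 1 \<le> j \<Longrightarrow> j \<le> M \<Longrightarrow> dC N Ks C j 0 = -1"
    and hCN: "\<And>j. 1 \<le> j \<Longrightarrow> j \<le> M \<Longrightarrow> C j N = 0"
    and hconv: "\<And>j i. 1 \<le> j \<Longrightarrow> j \<le> M \<Longrightarrow> 1 \<le> i \<Longrightarrow> i \<le> N \<Longrightarrow>
                  dC N Ks C j (i - 1) \<le> dC N Ks C j i"
    and hcal: "\<And>j i. 1 \<le> j \<Longrightarrow> j < M \<Longrightarrow> i \<le> N \<Longrightarrow> C j i \<le> C (Suc j) i"
    and h\<alpha>mono: "\<And>j. j < M \<Longrightarrow> mono_on {Ts j..Ts (Suc j)} (\<alpha> j)"
    and h\<alpha>range: "\<And>j t. j < M \<Longrightarrow> t \<in> {Ts j..Ts (Suc j)} \<Longrightarrow> \<alpha> j t \<in> {0..1}"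
    and h\<alpha>0: "\<And>j. j < M \<Longrightarrow> \<alpha> j (Ts j) = 0"
    and h\<alpha>1: "\<And>j. j < M \<Longrightarrow> \<alpha> j (Ts (Suc j)) = 1"
    and hCs: "\<And>j t k. j < M \<Longrightarrow> t \<in> {Ts j..Ts (Suc j)} \<Longrightarrow> 0 \<le> k \<Longrightarrow>
               Cs t k = \<alpha> j t * Cbar N Ks C (Suc j) k + (1 - \<alpha> j t) * Cbar N Ks C j k"
  shows "arbitrage_free_call_surface {0..Ts M} Cs"
proof -
  interpret call_price_data N M Ks Ts C \<alpha> Cs
    by unfold_locales fact+
  show ?thesis by (rule call_surface_arbitrage_free)
qed

end
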